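(* Let $W'$ and $W''$ be B-DMCs, and let $W^-=W'\boxminus W''$ and $W^+=W'\boxplus W''$. Then $$J(W^-)+J(W^+)\ \ge\ J(W')+J(W''),$$ and equality holds only if $J(W')\in\{0,1\}$ or $J(W'')\in\{0,1\}$.
   Context: A B-DMC $V$ is a channel with input alphabet $\{0,1\}$, a finite output alphabet $\mathcal Y$ and transition probabilities $V(y|x)$. With base-2 logarithms: $Z(V)=\sum_y\sqrt{V(y|0)V(y|1)}$ and $J(V)=\log\frac{2}{1+Z(V)}$. For B-DMCs $V':\{0,1\}\to\mathcal Y_1$ and $V'':\{0,1\}\to\mathcal Y_2$ define $V'\boxminus V'':\{0,1\}\to\mathcal Y_1\times\mathcal Y_2$ by $(V'\boxminus V'')(y_1,y_2|x_1)=\sum_{x_2\in\{0,1\}}\frac12V'(y_1|x_1\oplus x_2)V''(y_2|x_2)$, and $V'\boxplus V'':\{0,1\}\to\mathcal Y_1\times\mathcal Y_2\times\{0,1\}$ by $(V'\boxplus V'')(y_1,y_2,x_1|x_2)=\frac12V'(y_1|x_1\oplus x_2)V''(y_2|x_2)$. *)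

theory Defs
  imports "HOL-Analysis.Analysis"
begin

text \<open>A B-DMC with input alphabet {0,1} (encoded as bool: False = 0, True = 1) and
finite output alphabet (a finite type 'y). V x y is the transition probability V(y|x).\<close>

definition bdmc :: "(bool \<Rightarrow> 'y::finite \<Rightarrow> real) \<Rightarrow> bool" where
  "bdmc V \<longleftrightarrow> (\<forall>x y. 0 \<le> V x y) \<and> (\<forall>x. (\<Sum>y\<in>UNIV. V x y) = 1)"

definition bhatt :: "(bool \<Rightarrow> 'y::finite \<Rightarrow> real) \<Rightarrow> real" where
  "bhatt V = (\<Sum>y\<in>UNIV. sqrt (V False y * V True y))"

definition Jfun :: "(bool \<Rightarrow> 'y::finite \<Rightarrow> real) \<Rightarrow> real" where
  "Jfun V = log 2 (2 / (1 + bhatt V))"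

text \<open>XOR on bits is (\<noteq>) on bool.\<close>

definition chan_minus ::
  "(bool \<Rightarrow> 'a::finite \<Rightarrow> real) \<Rightarrow> (bool \<Rightarrow> 'b::finite \<Rightarrow> real) \<Rightarrow> bool \<Rightarrow> ('a \<times> 'b) \<Rightarrow> real" where
  "chan_minus V1 V2 x1 yy = (\<Sum>x2\<in>UNIV. (1/2) * V1 (x1 \<noteq> x2) (fst yy) * V2 x2 (snd yy))"

definition chan_plus ::
  "(bool \<Rightarrow> 'a::finite \<Rightarrow> real) \<Rightarrow> (bool \<Rightarrow> 'b::finite \<Rightarrow> real) \<Rightarrow> bool \<Rightarrow> ('a \<times> 'b \<times> bool) \<Rightarrow> real" where
  "chan_plus V1 V2 x2 yy = (case yy of (y1, y2, x1) \<Rightarrow> (1/2) * V1 (x1 \<noteq> x2) y1 * V2 x2 y2)"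

end

theory Submission
  imports Defs
begin

text \<open>With \<open>Z' = Z(W')\<close>, \<open>Z'' = Z(W'')\<close> one has \<open>Z(W\<^sup>+) = Z' Z''\<close> and
\<open>Z(W\<^sup>-) \<le> Z' + Z'' - Z' Z''\<close>, the latter pointwise in the output pair by an elementary
inequality between square roots. Since \<open>J(V) = 1 - log (1 + Z(V))\<close>, the theorem reduces to
\<open>(1 + Z' + Z'' - Z' Z'') (1 + Z' Z'') = (1 + Z') (1 + Z'') - Z' Z'' (1 - Z') (1 - Z'')\<close>;
the defect vanishes only if \<open>Z'\<close> or \<open>Z''\<close> is \<open>0\<close> or \<open>1\<close>, i.e. \<open>J(W')\<close> or \<open>J(W'')\<close> is \<open>1\<close> or \<open>0\<close>.\<close>

lemma sqrt_mixed_products_le: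
  fixes p q r t :: real
  assumes "0 \<le> p" "0 \<le> q" "0 \<le> r" "0 \<le> t"
  shows "sqrt ((p\<^sup>2 * r\<^sup>2 + q\<^sup>2 * t\<^sup>2) * (p\<^sup>2 * t\<^sup>2 + q\<^sup>2 * r\<^sup>2))
           \<le> p * q * (r\<^sup>2 + t\<^sup>2) + r * t * (p\<^sup>2 + q\<^sup>2) - 2 * p * q * r * t"
    (is "sqrt ?L \<le> ?R")
proof -
  have "?R = p * q * (r\<^sup>2 + t\<^sup>2) + r * t * (p - q)\<^sup>2"
    by (simp add: algebra_simps power2_eq_square)
  moreover have "0 \<le> p * q * (r\<^sup>2 + t\<^sup>2) + r * t * (p - q)\<^sup>2"
    using assms by simp
  ultimately have R_nonneg: "0 \<le> ?R" by linarith
  have "?R\<^sup>2 - ?L = 2 * (p * q * r * t) * ((p - q)\<^sup>2 * (r - t)\<^sup>2)"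
    by (simp add: algebra_simps power2_eq_square)
  moreover have "0 \<le> 2 * (p * q * r * t) * ((p - q)\<^sup>2 * (r - t)\<^sup>2)"
    using assms by simp
  ultimately have "?L \<le> ?R\<^sup>2" by linarith
  with R_nonneg show ?thesis
    by (rule real_le_lsqrt)
qed

lemma sqrt_cross_sums_le:
  fixes a b c d :: real
  assumes "0 \<le> a" "0 \<le> b" "0 \<le> c" "0 \<le> d"
  shows "sqrt ((a * d + b * c) * (a * c + b * d))
           \<le> sqrt (a * b) * (c + d) + sqrt (c * d) * (a + b) - 2 * sqrt (a * b) * sqrt (c * d)"
  using sqrt_mixed_products_le[of "sqrt a" "sqrt b" "sqrt c" "sqrt d"] assms
  by (simp add: real_sqrt_mult ac_simps)

lemma sum_UNIV_prod:
  "(\<Sum>y\<in>(UNIV :: ('a::finite \<times> 'b::finite) set). f y) = (\<Sum>y1\<in>UNIV. \<Sum>y2\<in>UNIV. f (y1, y2))"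
  by (subst UNIV_Times_UNIV[symmetric]) (simp add: sum.cartesian_product)

lemma bdmc_nonneg: "bdmc V \<Longrightarrow> 0 \<le> V x y"
  and bdmc_sum_eq_1: "bdmc V \<Longrightarrow> (\<Sum>y\<in>UNIV. V x y) = 1"
  unfolding bdmc_def by auto

lemma bhatt_nonneg: "(\<And>x y. 0 \<le> V x y) \<Longrightarrow> 0 \<le> bhatt V"
  unfolding bhatt_def by (auto intro!: sum_nonneg)

lemma bhatt_le_1:
  assumes "bdmc V"
  shows "bhatt V \<le> 1"
proof -
  have "bhatt V \<le> (\<Sum>y\<in>UNIV. (V False y + V True y) / 2)"
    unfolding bhatt_def using assms
    by (intro sum_mono) (metis arith_geo_mean_sqrt bdmc_nonneg)
  also have "\<dots> = 1"
    using assms by (simp add: sum.distrib bdmc_sum_eq_1 sum_divide_distrib[symmetric])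
  finally show ?thesis .
qed

lemma Jfun_eq: "0 \<le> bhatt V \<Longrightarrow> Jfun V = 1 - log 2 (1 + bhatt V)"
  unfolding Jfun_def by (simp add: log_divide)

lemma Jfun_add:
  assumes "0 \<le> bhatt U" "0 \<le> bhatt V"
  shows "Jfun U + Jfun V = 2 - log 2 ((1 + bhatt U) * (1 + bhatt V))"
  using assms by (simp add: Jfun_eq log_mult add_pos_nonneg)

lemma bhatt_chan_plus:
  fixes W1 :: "bool \<Rightarrow> 'a::finite \<Rightarrow> real" and W2 :: "bool \<Rightarrow> 'b::finite \<Rightarrow> real"
  assumes "\<And>x y. 0 \<le> W1 x y" "\<And>x y. 0 \<le> W2 x y"
  shows "bhatt (chan_plus W1 W2) = bhatt W1 * bhatt W2"
proof -
  have split: "sqrt (1/2 * W1 u y1 * W2 False y2 * (1/2 * W1 v y1 * W2 True y2))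
      = 1/2 * sqrt (W1 u y1 * W1 v y1) * sqrt (W2 False y2 * W2 True y2)" for u v y1 y2
    by (simp add: real_sqrt_mult[symmetric] real_sqrt_divide mult_ac)
  have "bhatt (chan_plus W1 W2) = (\<Sum>y1\<in>UNIV. \<Sum>y2\<in>UNIV. \<Sum>x1\<in>UNIV.
      sqrt (chan_plus W1 W2 False (y1, y2, x1) * chan_plus W1 W2 True (y1, y2, x1)))"
    unfolding bhatt_def by (simp add: sum_UNIV_prod)
  also have "\<dots> = (\<Sum>y1\<in>UNIV. \<Sum>y2\<in>UNIV.
      sqrt (W1 False y1 * W1 True y1) * sqrt (W2 False y2 * W2 True y2))"
    unfolding chan_plus_def using split[where u = False and v = True] split[where u = True and v = False]
    by (simp add: UNIV_bool mult_ac)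
  also have "\<dots> = bhatt W1 * bhatt W2"
    unfolding bhatt_def by (simp add: sum_product)
  finally show ?thesis .
qed

lemma bhatt_chan_minus_le:
  fixes W1 :: "bool \<Rightarrow> 'a::finite \<Rightarrow> real" and W2 :: "bool \<Rightarrow> 'b::finite \<Rightarrow> real"
  assumes "bdmc W1" "bdmc W2"
  shows "bhatt (chan_minus W1 W2) \<le> bhatt W1 + bhatt W2 - bhatt W1 * bhatt W2"
proof -
  define A where "A y1 = sqrt (W1 False y1 * W1 True y1)" for y1
  define C where "C y2 = sqrt (W2 False y2 * W2 True y2)" for y2
  have pointwise: "sqrt (chan_minus W1 W2 False (y1, y2) * chan_minus W1 W2 True (y1, y2))
      \<le> A y1 * ((W2 False y2 + W2 True y2) / 2) + (W1 False y1 + W1 True y1) / 2 * C y2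
         - A y1 * C y2" for y1 y2
  proof -
    let ?a = "W1 False y1" and ?b = "W1 True y1" and ?d = "W2 False y2" and ?c = "W2 True y2"
    have "chan_minus W1 W2 False (y1, y2) * chan_minus W1 W2 True (y1, y2)
        = (1/2)\<^sup>2 * ((?a * ?d + ?b * ?c) * (?a * ?c + ?b * ?d))"
      unfolding chan_minus_def by (simp add: UNIV_bool algebra_simps power2_eq_square)
    then have "sqrt (chan_minus W1 W2 False (y1, y2) * chan_minus W1 W2 True (y1, y2))
        = 1/2 * sqrt ((?a * ?d + ?b * ?c) * (?a * ?c + ?b * ?d))"
      by (simp add: real_sqrt_mult)
    also have "\<dots> \<le> 1/2 * (A y1 * (?d + ?c) + C y2 * (?a + ?b) - 2 * A y1 * C y2)"
      unfolding A_def C_def using sqrt_cross_sums_le[of ?a ?b ?c ?d] assms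
      by (simp add: bdmc_nonneg ac_simps)
    finally show ?thesis by (simp add: field_simps)
  qed
  have average_sum: "(\<Sum>y\<in>UNIV. (W x y + W x' y) / 2) = 1" if "bdmc W"
    for W :: "bool \<Rightarrow> 'c::finite \<Rightarrow> real" and x x'
    using that by (simp add: sum.distrib bdmc_sum_eq_1 flip: sum_divide_distrib)
  have inner: "(\<Sum>y2\<in>UNIV. A y1 * ((W2 False y2 + W2 True y2) / 2)
        + (W1 False y1 + W1 True y1) / 2 * C y2 - A y1 * C y2)
      = A y1 + (W1 False y1 + W1 True y1) / 2 * sum C UNIV - A y1 * sum C UNIV" for y1
    by (simp only: sum_subtractf sum.distrib sum_distrib_left[symmetric] average_sum[OF assms(2)])
  have "bhatt (chan_minus W1 W2) \<le> (\<Sum>y1\<in>UNIV.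
      A y1 + (W1 False y1 + W1 True y1) / 2 * sum C UNIV - A y1 * sum C UNIV)"
    unfolding bhatt_def sum_UNIV_prod inner[symmetric] by (intro sum_mono pointwise)
  also have "\<dots> = sum A UNIV + sum C UNIV - sum A UNIV * sum C UNIV"
    by (simp only: sum_subtractf sum.distrib sum_distrib_right[symmetric] average_sum[OF assms(1)])
  finally show ?thesis
    unfolding A_def C_def bhatt_def .
qed

lemma log_polar_product:
  fixes a b m :: real
  assumes a: "0 \<le> a" "a \<le> 1" and b: "0 \<le> b" "b \<le> 1"
    and m: "0 \<le> m" "m \<le> a + b - a * b"
  shows "log 2 ((1 + m) * (1 + a * b)) \<le> log 2 ((1 + a) * (1 + b))"
    and "log 2 ((1 + m) * (1 + a * b)) = log 2 ((1 + a) * (1 + b)) \<Longrightarrow> a \<in> {0, 1} \<or> b \<in> {0, 1}"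
proof -
  have pos: "0 < (1 + m) * (1 + a * b)"
    using a b m by (simp add: add_pos_nonneg)
  have "(1 + m) * (1 + a * b) \<le> (1 + (a + b - a * b)) * (1 + a * b)"
    using a b m by (intro mult_right_mono) auto
  also have "\<dots> = (1 + a) * (1 + b) - a * b * ((1 - a) * (1 - b))"
    by (simp add: algebra_simps)
  finally have gap: "(1 + m) * (1 + a * b) + a * b * ((1 - a) * (1 - b)) \<le> (1 + a) * (1 + b)"
    by linarith
  have defect_nonneg: "0 \<le> a * b * ((1 - a) * (1 - b))"
    using a b by simp
  then have le: "(1 + m) * (1 + a * b) \<le> (1 + a) * (1 + b)"
    using gap by linarith
  with pos show "log 2 ((1 + m) * (1 + a * b)) \<le> log 2 ((1 + a) * (1 + b))"
    by simp
  show "a \<in> {0, 1} \<or> b \<in> {0, 1}"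
    if "log 2 ((1 + m) * (1 + a * b)) = log 2 ((1 + a) * (1 + b))"
  proof -
    have "(1 + m) * (1 + a * b) = (1 + a) * (1 + b)"
      using log_inj[of 2] that pos le by (auto dest: inj_onD)
    with gap defect_nonneg have "a * b * ((1 - a) * (1 - b)) = 0"
      by linarith
    then show ?thesis by auto
  qed
qed

theorem proposition1:
  fixes W1 :: "bool \<Rightarrow> 'a::finite \<Rightarrow> real" and W2 :: "bool \<Rightarrow> 'b::finite \<Rightarrow> real"
  assumes "bdmc W1" and "bdmc W2"
  shows "Jfun (chan_minus W1 W2) + Jfun (chan_plus W1 W2) \<ge> Jfun W1 + Jfun W2 \<and>
         (Jfun (chan_minus W1 W2) + Jfun (chan_plus W1 W2) = Jfun W1 + Jfun W2 \<longrightarrow>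
           (Jfun W1 \<in> {0, 1} \<or> Jfun W2 \<in> {0, 1}))"
proof -
  have nonneg: "\<And>x y. 0 \<le> W1 x y" "\<And>x y. 0 \<le> W2 x y"
    using assms by (auto simp: bdmc_nonneg)
  have bounds: "0 \<le> bhatt W1" "bhatt W1 \<le> 1" "0 \<le> bhatt W2" "bhatt W2 \<le> 1"
    using assms nonneg by (auto simp: bhatt_nonneg bhatt_le_1)
  have minus_nonneg: "0 \<le> bhatt (chan_minus W1 W2)"
    by (rule bhatt_nonneg) (use nonneg in \<open>auto simp: chan_minus_def intro!: sum_nonneg\<close>)
  have plus: "bhatt (chan_plus W1 W2) = bhatt W1 * bhatt W2"
    using nonneg by (rule bhatt_chan_plus)
  have "Jfun (chan_minus W1 W2) + Jfun (chan_plus W1 W2)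
      = 2 - log 2 ((1 + bhatt (chan_minus W1 W2)) * (1 + bhatt W1 * bhatt W2))"
    using Jfun_add[of "chan_minus W1 W2" "chan_plus W1 W2"] minus_nonneg bounds by (simp add: plus)
  moreover have "Jfun W1 + Jfun W2 = 2 - log 2 ((1 + bhatt W1) * (1 + bhatt W2))"
    using bounds by (simp add: Jfun_add)
  moreover note log_polar_product[OF bounds minus_nonneg bhatt_chan_minus_le[OF assms]]
  ultimately show ?thesis
    using bounds by (auto simp: Jfun_eq)
qed

end
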